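(* Let $\mathbf{A}$ be an affine algebra such that $\mathbf{A}^2$ is finitely generated. Then $d_{\mathbf{A}}(n)\in O(n)$. If, moreover, $\mathbf{A}$ is finite and has more than one element, then $d_{\mathbf{A}}(n)\in \Theta(n)$.
   Context: An algebra is affine if it is polynomially equivalent to a module. For an algebra $\mathbf{A}$ and $n\in\omega$, $d_{\mathbf{A}}(n)$ is the least size of a generating set of the direct power $\mathbf{A}^n$. Standard Big-O and Big-Theta notation is used. *)

theory Defs
  imports "HOL-Algebra.Module" "HOL-Library.Landau_Symbols"
begin

text \<open>An algebra is a carrier set A together with a set F of fundamental
operations; each operation is a pair (k, f) with k its arity and f acting on
argument lists of length k. Only the values of f on lists of length k over A
matter.\<close>

definition is_algebra :: "'a set \<Rightarrow> (nat \<times> ('a list \<Rightarrow> 'a)) set \<Rightarrow> bool" where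
  "is_algebra A F \<longleftrightarrow> A \<noteq> {} \<and>
     (\<forall>(k, f) \<in> F. \<forall>xs. length xs = k \<and> set xs \<subseteq> A \<longrightarrow> f xs \<in> A)"

inductive_set Sg :: "(nat \<times> ('a list \<Rightarrow> 'a)) set \<Rightarrow> 'a set \<Rightarrow> 'a set"
  for F X where
  gen: "x \<in> X \<Longrightarrow> x \<in> Sg F X"
| app: "(k, f) \<in> F \<Longrightarrow> length xs = k \<Longrightarrow> \<forall>x \<in> set xs. x \<in> Sg F X \<Longrightarrow> f xs \<in> Sg F X"

definition generates :: "'a set \<Rightarrow> (nat \<times> ('a list \<Rightarrow> 'a)) set \<Rightarrow> 'a set \<Rightarrow> bool" where
  "generates A F X \<longleftrightarrow> X \<subseteq> A \<and> Sg F X = A"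

definition finitely_generated :: "'a set \<Rightarrow> (nat \<times> ('a list \<Rightarrow> 'a)) set \<Rightarrow> bool" where
  "finitely_generated A F \<longleftrightarrow> (\<exists>X. finite X \<and> generates A F X)"

definition pow_carrier :: "'a set \<Rightarrow> nat \<Rightarrow> 'a list set" where
  "pow_carrier A n = {xs. length xs = n \<and> set xs \<subseteq> A}"

definition pow_ops :: "(nat \<times> ('a list \<Rightarrow> 'a)) set \<Rightarrow> nat \<Rightarrow> (nat \<times> ('a list list \<Rightarrow> 'a list)) set" where
  "pow_ops F n = (\<lambda>(k, f). (k, \<lambda>args. map (\<lambda>i. f (map (\<lambda>v. v ! i) args)) [0..<n])) ` F"

definition d_gen :: "'a set \<Rightarrow> (nat \<times> ('a list \<Rightarrow> 'a)) set \<Rightarrow> nat \<Rightarrow> nat" where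
  "d_gen A F n = (LEAST m. \<exists>X. finite X \<and> card X = m \<and> generates (pow_carrier A n) (pow_ops F n) X)"

inductive_set Pol :: "'a set \<Rightarrow> (nat \<times> ('a list \<Rightarrow> 'a)) set \<Rightarrow> nat \<Rightarrow> ('a list \<Rightarrow> 'a) set"
  for A F k where
  proj: "i < k \<Longrightarrow> (\<lambda>xs. xs ! i) \<in> Pol A F k"
| const: "c \<in> A \<Longrightarrow> (\<lambda>xs. c) \<in> Pol A F k"
| comp: "(m, f) \<in> F \<Longrightarrow> length gs = m \<Longrightarrow> \<forall>g \<in> set gs. g \<in> Pol A F k \<Longrightarrow>
           (\<lambda>xs. f (map (\<lambda>g. g xs) gs)) \<in> Pol A F k"

definition poly_equivalent :: "'a set \<Rightarrow> (nat \<times> ('a list \<Rightarrow> 'a)) set \<Rightarrow> (nat \<times> ('a list \<Rightarrow> 'a)) set \<Rightarrow> bool" where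
  "poly_equivalent A F G \<longleftrightarrow>
     (\<forall>k. (\<lambda>p. restrict p (pow_carrier A k)) ` Pol A F k
        = (\<lambda>p. restrict p (pow_carrier A k)) ` Pol A G k)"

text \<open>Left R-module, R a ring with identity (HOL-Algebra's locale module
requires a commutative ring, so we state the axioms over an arbitrary ring).\<close>
definition ring_module :: "('r, 'c) ring_scheme \<Rightarrow> ('r, 'a, 'd) module_scheme \<Rightarrow> bool" where
  "ring_module R M \<longleftrightarrow> ring R \<and> abelian_group M \<and>
    (\<forall>a \<in> carrier R. \<forall>x \<in> carrier M. a \<odot>\<^bsub>M\<^esub> x \<in> carrier M) \<and>
    (\<forall>a \<in> carrier R. \<forall>b \<in> carrier R. \<forall>x \<in> carrier M.
        (a \<oplus>\<^bsub>R\<^esub> b) \<odot>\<^bsub>M\<^esub> x = a \<odot>\<^bsub>M\<^esub> x \<oplus>\<^bsub>M\<^esub> b \<odot>\<^bsub>M\<^esub> x) \<and>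
    (\<forall>a \<in> carrier R. \<forall>x \<in> carrier M. \<forall>y \<in> carrier M.
        a \<odot>\<^bsub>M\<^esub> (x \<oplus>\<^bsub>M\<^esub> y) = a \<odot>\<^bsub>M\<^esub> x \<oplus>\<^bsub>M\<^esub> a \<odot>\<^bsub>M\<^esub> y) \<and>
    (\<forall>a \<in> carrier R. \<forall>b \<in> carrier R. \<forall>x \<in> carrier M.
        (a \<otimes>\<^bsub>R\<^esub> b) \<odot>\<^bsub>M\<^esub> x = a \<odot>\<^bsub>M\<^esub> (b \<odot>\<^bsub>M\<^esub> x)) \<and>
    (\<forall>x \<in> carrier M. \<one>\<^bsub>R\<^esub> \<odot>\<^bsub>M\<^esub> x = x)"

definition module_ops :: "('r, 'c) ring_scheme \<Rightarrow> ('r, 'a, 'd) module_scheme \<Rightarrow> (nat \<times> ('a list \<Rightarrow> 'a)) set" where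
  "module_ops R M =
     {(2, \<lambda>xs. xs ! 0 \<oplus>\<^bsub>M\<^esub> xs ! 1), (1, \<lambda>xs. \<ominus>\<^bsub>M\<^esub> (xs ! 0)), (0, \<lambda>xs. \<zero>\<^bsub>M\<^esub>)}
     \<union> {(1, \<lambda>xs. r \<odot>\<^bsub>M\<^esub> (xs ! 0)) | r. r \<in> carrier R}"

definition poly_equiv_to_module :: "'a set \<Rightarrow> (nat \<times> ('a list \<Rightarrow> 'a)) set \<Rightarrow>
    ('r, 'c) ring_scheme \<Rightarrow> ('r, 'a, 'd) module_scheme \<Rightarrow> bool" where
  "poly_equiv_to_module A F R M \<longleftrightarrow>
     ring_module R M \<and> carrier M = A \<and> poly_equivalent A F (module_ops R M)"

end

theory Submission
  imports Defs
begin

text \<open>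
  The coordinate embeddings \<open>A\<^sup>2 \<rightarrow> A\<^sup>n\<close>, \<open>(a, b) \<mapsto> (b, \<dots>, b, a, b, \<dots>, b)\<close>, are
  homomorphisms, so the images of a finite generating set \<open>G\<close> of \<open>A\<^sup>2\<close> under the \<open>n\<close>
  embeddings generate every tuple that is constant except in one coordinate. The Maltsev
  polynomial \<open>x - y + z\<close> of the module assembles an arbitrary tuple from these, one coordinate
  at a time; hence \<open>d(n) \<le> |G| n\<close>.

  Conversely, the \<open>m\<close>-ary polynomial operations of a module are affine, so each is determined
  by its values at \<open>0\<close> and at the \<open>m |A|\<close> vectors \<open>a e\<^sub>i\<close>; there are at most
  \<open>|A|\<^bsup>m|A|+1\<^esup>\<close> of them. Every element of \<open>A\<^sup>n\<close> generated by \<open>m\<close> tuples is such an operation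
  applied to the columns of the generators, so \<open>|A|\<^sup>n \<le> |A|\<^bsup>m|A|+1\<^esup>\<close>, i.e.
  \<open>n \<le> |A| d(n) + 1\<close>.
\<close>

definition pol_apply :: "nat \<Rightarrow> ('a list \<Rightarrow> 'a) \<Rightarrow> 'a list list \<Rightarrow> 'a list" where
  "pol_apply n p vs = map (\<lambda>j. p (map (\<lambda>v. v ! j) vs)) [0..<n]"

lemma length_pol_apply [simp]: "length (pol_apply n p vs) = n"
  by (simp add: pol_apply_def)

lemma nth_pol_apply [simp]: "j < n \<Longrightarrow> pol_apply n p vs ! j = p (map (\<lambda>v. v ! j) vs)"
  by (simp add: pol_apply_def)

lemma pow_ops_eq: "pow_ops F n = (\<lambda>(k, f). (k, pol_apply n f)) ` F"
  by (simp add: pow_ops_def pol_apply_def[abs_def])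

lemma pow_ops_memI: "(k, f) \<in> F \<Longrightarrow> (k, pol_apply n f) \<in> pow_ops F n"
  by (force simp: pow_ops_eq)

lemma pow_opsE:
  assumes "(k, g) \<in> pow_ops F n"
  obtains f where "(k, f) \<in> F" and "g = pol_apply n f"
  using assms by (auto simp: pow_ops_eq)

lemma length_pow_carrier: "xs \<in> pow_carrier A n \<Longrightarrow> length xs = n"
  by (simp add: pow_carrier_def)

lemma card_pow_carrier: "finite A \<Longrightarrow> card (pow_carrier A n) = card A ^ n"
  using card_lists_length_eq[of A n] by (simp add: pow_carrier_def conj_commute)

lemma pow_carrier_nth: "xs \<in> pow_carrier A n \<Longrightarrow> i < n \<Longrightarrow> xs ! i \<in> A"
  by (auto simp: pow_carrier_def)

lemma Sg_mono: "x \<in> Sg F X \<Longrightarrow> X \<subseteq> Y \<Longrightarrow> x \<in> Sg F Y"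
  by (induction rule: Sg.induct) (auto intro: Sg.intros)

lemma pol_apply_in_pow_carrier:
  assumes alg: "is_algebra A F" and "(k, f) \<in> F" and "length vs = k"
    and "set vs \<subseteq> pow_carrier A n"
  shows "pol_apply n f vs \<in> pow_carrier A n"
proof -
  have "f (map (\<lambda>v. v ! j) vs) \<in> A" if "j < n" for j
  proof -
    have "set (map (\<lambda>v. v ! j) vs) \<subseteq> A"
      using assms(4) that by (auto intro: pow_carrier_nth)
    then show ?thesis using alg assms(2,3) unfolding is_algebra_def by auto
  qed
  then show ?thesis by (auto simp: pow_carrier_def in_set_conv_nth)
qed

lemma Sg_subset_pow_carrier:
  assumes alg: "is_algebra A F" and X: "X \<subseteq> pow_carrier A n"
  shows "Sg (pow_ops F n) X \<subseteq> pow_carrier A n"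
proof
  fix x assume "x \<in> Sg (pow_ops F n) X"
  then show "x \<in> pow_carrier A n"
  proof (induction rule: Sg.induct)
    case (app k g xs)
    then obtain f where "(k, f) \<in> F" and "g = pol_apply n f" by (auto elim: pow_opsE)
    with app show ?case by (auto intro: pol_apply_in_pow_carrier[OF alg])
  qed (use X in auto)
qed

lemma generates_pow_zero:
  assumes "is_algebra A F"
  shows "generates (pow_carrier A 0) (pow_ops F 0) {[]}"
proof -
  have "pow_carrier A 0 = {[]}" by (auto simp: pow_carrier_def)
  with Sg_subset_pow_carrier[OF assms, of "{[]}" 0] show ?thesis
    by (auto simp: generates_def intro: Sg.gen)
qed


lemma Sg_pow_hom_image:
  assumes hom: "\<And>k f vs. (k, f) \<in> F \<Longrightarrow> h (pol_apply a f vs) = pol_apply b f (map h vs)"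
  shows "x \<in> Sg (pow_ops F a) X \<Longrightarrow> h x \<in> Sg (pow_ops F b) (h ` X)"
proof (induction rule: Sg.induct)
  case (app k g xs)
  then obtain f where f: "(k, f) \<in> F" "g = pol_apply a f" by (auto elim: pow_opsE)
  have "pol_apply b f (map h xs) \<in> Sg (pow_ops F b) (h ` X)"
    using app by (auto intro!: Sg.app[OF pow_ops_memI[OF f(1)]])
  then show ?case using hom[OF f(1)] by (simp add: f)
qed (auto intro: Sg.gen)

lemma pol_apply_Pol_in_Sg:
  assumes alg: "is_algebra A F" and X: "X \<subseteq> pow_carrier A n"
    and diag: "\<And>c. c \<in> A \<Longrightarrow> replicate n c \<in> Sg (pow_ops F n) X"
    and p: "p \<in> Pol A F k"
  shows "length vs = k \<Longrightarrow> set vs \<subseteq> Sg (pow_ops F n) X \<Longrightarrow> pol_apply n p vs \<in> Sg (pow_ops F n) X"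
  using p
proof (induction p arbitrary: vs rule: Pol.induct)
  case (proj i)
  then have "vs ! i \<in> pow_carrier A n" using Sg_subset_pow_carrier[OF alg X] by (metis nth_mem subsetD)
  then have "pol_apply n (\<lambda>xs. xs ! i) vs = vs ! i" using proj by (intro nth_equalityI) (auto simp: pow_carrier_def)
  then show ?case using proj by auto
next
  case (const c)
  then show ?case using diag by (simp add: pol_apply_def map_replicate_const)
next
  case (comp m f gs)
  have "pol_apply n f (map (\<lambda>g. pol_apply n g vs) gs) \<in> Sg (pow_ops F n) X"
    using comp by (auto intro!: Sg.app[OF pow_ops_memI[OF comp.hyps(1)]])
  moreover have "pol_apply n f (map (\<lambda>g. pol_apply n g vs) gs) = pol_apply n (\<lambda>xs. f (map (\<lambda>g. g xs) gs)) vs"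
    by (rule nth_equalityI) (auto simp: comp_def)
  ultimately show ?case by simp
qed

lemma Sg_pow_imp_pol_apply:
  assumes len: "\<forall>x\<in>set xs. length x = n"
  shows "s \<in> Sg (pow_ops F n) (set xs) \<Longrightarrow> \<exists>p\<in>Pol A F (length xs). s = pol_apply n p xs"
proof (induction rule: Sg.induct)
  case (gen x)
  then obtain i where i: "i < length xs" "x = xs ! i" by (auto simp: in_set_conv_nth)
  then have "x = pol_apply n (\<lambda>ys. ys ! i) xs" using len by (auto intro: nth_equalityI)
  then show ?case using Pol.proj[OF i(1)] by blast
next
  case (app k g args)
  then obtain f where f: "(k, f) \<in> F" "g = pol_apply n f" by (auto elim: pow_opsE)
  from app.IH obtain P where P: "\<And>v. v \<in> set args \<Longrightarrow> P v \<in> Pol A F (length xs) \<and> v = pol_apply n (P v) xs"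
    using bchoice[of "set args" "\<lambda>v p. p \<in> Pol A F (length xs) \<and> v = pol_apply n p xs"] by blast
  have "(\<lambda>ys. f (map (\<lambda>q. q ys) (map P args))) \<in> Pol A F (length xs)"
    using P app.hyps by (intro Pol.comp[OF f(1)]) auto
  moreover have "g args = pol_apply n (\<lambda>ys. f (map (\<lambda>q. q ys) (map P args))) xs"
  proof (rule nth_equalityI)
    fix j assume "j < length (g args)"
    then have "j < n" by (simp add: f)
    moreover have cols: "map (\<lambda>v. v ! j) args = map (\<lambda>v. P v (map (\<lambda>x. x ! j) xs)) args"
      using P \<open>j < n\<close> by (intro map_cong) (metis nth_pol_apply)+
    ultimately show "g args ! j = pol_apply n (\<lambda>ys. f (map (\<lambda>q. q ys) (map P args))) xs ! j"
      by (simp add: f comp_def cols)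
  qed (simp add: f)
  ultimately show ?case by blast
qed

lemma d_gen_le_card:
  "finite X \<Longrightarrow> generates (pow_carrier A n) (pow_ops F n) X \<Longrightarrow> d_gen A F n \<le> card X"
  unfolding d_gen_def by (rule Least_le) blast

lemma d_gen_attained:
  assumes "finitely_generated (pow_carrier A n) (pow_ops F n)"
  obtains X where "finite X" "card X = d_gen A F n" "generates (pow_carrier A n) (pow_ops F n) X"
proof -
  have "\<exists>X. finite X \<and> card X = d_gen A F n \<and> generates (pow_carrier A n) (pow_ops F n) X"
    unfolding d_gen_def by (rule LeastI_ex) (use assms in \<open>auto simp: finitely_generated_def\<close>)
  with that show ?thesis by blast
qed

definition maltsev_polynomial :: "'a set \<Rightarrow> (nat \<times> ('a list \<Rightarrow> 'a)) set \<Rightarrow> ('a list \<Rightarrow> 'a) \<Rightarrow> bool" where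
  "maltsev_polynomial A F p \<longleftrightarrow> p \<in> Pol A F 3 \<and> (\<forall>a\<in>A. \<forall>b\<in>A. p [a, b, b] = a \<and> p [b, b, a] = a)"

definition coord_embed :: "nat \<Rightarrow> nat \<Rightarrow> 'a list \<Rightarrow> 'a list" where
  "coord_embed i n v = map (\<lambda>j. if j = i then v ! 0 else v ! 1) [0..<n]"

lemma coord_embed_pol_apply:
  "coord_embed i n (pol_apply 2 f vs) = pol_apply n f (map (coord_embed i n) vs)"
  unfolding coord_embed_def pol_apply_def by (rule map_cong) (auto simp: comp_def)

lemma coord_embed_in_pow_carrier:
  "v \<in> pow_carrier A 2 \<Longrightarrow> coord_embed i n v \<in> pow_carrier A n"
  by (auto simp: coord_embed_def pow_carrier_def)

lemma pow_carrier_subset_Sg_if_coord_embeds: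
  assumes alg: "is_algebra A F" and maltsev: "maltsev_polynomial A F p"
    and X: "X \<subseteq> pow_carrier A n" and n: "n \<ge> 1"
    and embed: "\<And>i a b. i < n \<Longrightarrow> a \<in> A \<Longrightarrow> b \<in> A \<Longrightarrow> coord_embed i n [a, b] \<in> Sg (pow_ops F n) X"
  shows "pow_carrier A n \<subseteq> Sg (pow_ops F n) X"
proof
  let ?S = "Sg (pow_ops F n) X"
  from maltsev have p: "p \<in> Pol A F 3"
    and p_id: "\<And>a b. a \<in> A \<Longrightarrow> b \<in> A \<Longrightarrow> p [a, b, b] = a \<and> p [b, b, a] = a"
    by (auto simp: maltsev_polynomial_def)
  have diag: "replicate n a \<in> ?S" if "a \<in> A" for a
  proof -
    have "coord_embed 0 n [a, a] = replicate n a" by (rule nth_equalityI) (auto simp: coord_embed_def)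
    then show ?thesis using embed[of 0 a a] n that by simp
  qed
  obtain c where c: "c \<in> A" using alg unfolding is_algebra_def by auto
  fix y assume y: "y \<in> pow_carrier A n"
  define z where "z j = map (\<lambda>l. if l < j then y ! l else c) [0..<n]" for j
  have "z j \<in> ?S" if "j \<le> n" for j
    using that
  proof (induction j)
    case 0
    have "z 0 = replicate n c" unfolding z_def by (rule nth_equalityI) auto
    then show ?case using diag[OF c] by simp
  next
    case (Suc j)
    let ?vs = "[z j, replicate n c, coord_embed j n [y ! j, c]]"
    have "pol_apply n p ?vs \<in> ?S"
      using Suc pow_carrier_nth[OF y] c diag[OF c]
      by (intro pol_apply_Pol_in_Sg[OF alg X diag p]) (auto simp: numeral_3_eq_3 intro: embed)
    moreover
    \<comment> \<open>coordinatewise, the arguments of \<open>p\<close> are \<open>(y\<^sub>l, c, c)\<close>, \<open>(c, c, y\<^sub>j)\<close> or \<open>(c, c, c)\<close>\<close>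
    have "pol_apply n p ?vs = z (Suc j)"
      using pow_carrier_nth[OF y] c p_id
      by (intro nth_equalityI) (auto simp: z_def coord_embed_def less_Suc_eq)
    ultimately show ?case by simp
  qed
  moreover have "z n = y" using y unfolding z_def pow_carrier_def by (intro nth_equalityI) auto
  ultimately show "y \<in> ?S" by auto
qed

lemma generates_pow_by_coord_embeds:
  assumes alg: "is_algebra A F" and maltsev: "maltsev_polynomial A F p"
    and G: "generates (pow_carrier A 2) (pow_ops F 2) G" and n: "n \<ge> 1"
  shows "generates (pow_carrier A n) (pow_ops F n) (\<Union>i<n. coord_embed i n ` G)"
proof -
  let ?X = "\<Union>i<n. coord_embed i n ` G"
  have X: "?X \<subseteq> pow_carrier A n"
    using G by (auto simp: generates_def intro: coord_embed_in_pow_carrier)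
  have "coord_embed i n [a, b] \<in> Sg (pow_ops F n) ?X" if "i < n" "a \<in> A" "b \<in> A" for i a b
  proof -
    have "[a, b] \<in> Sg (pow_ops F 2) G" using G that by (simp add: generates_def pow_carrier_def)
    then have "coord_embed i n [a, b] \<in> Sg (pow_ops F n) (coord_embed i n ` G)"
      by (rule Sg_pow_hom_image[OF coord_embed_pol_apply])
    then show ?thesis by (rule Sg_mono) (use that in auto)
  qed
  then have "pow_carrier A n \<subseteq> Sg (pow_ops F n) ?X"
    by (rule pow_carrier_subset_Sg_if_coord_embeds[OF alg maltsev X n])
  with Sg_subset_pow_carrier[OF alg X] X show ?thesis by (auto simp: generates_def)
qed

lemma card_coord_embeds_le:
  assumes "finite G"
  shows "card (\<Union>i<n. coord_embed i n ` G) \<le> card G * n"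
proof -
  have "card (\<Union>i<n. coord_embed i n ` G) \<le> (\<Sum>i<n. card (coord_embed i n ` G))" by (rule card_UN_le) simp
  also have "\<dots> \<le> (\<Sum>i<n. card G)" using \<open>finite G\<close> by (intro sum_mono card_image_le)
  finally show ?thesis by (simp add: mult.commute)
qed

lemma ring_module_abelian_group: "ring_module R M \<Longrightarrow> abelian_group M"
  by (simp add: ring_module_def)

lemma ring_module_smult_a_inv:
  assumes rm: "ring_module R M" and r: "r \<in> carrier R" and x: "x \<in> carrier M"
  shows "r \<odot>\<^bsub>M\<^esub> (\<ominus>\<^bsub>M\<^esub> x) = \<ominus>\<^bsub>M\<^esub> (r \<odot>\<^bsub>M\<^esub> x)"
proof -
  have "group_hom (add_monoid M) (add_monoid M) (\<lambda>x. r \<odot>\<^bsub>M\<^esub> x)"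
    using rm r abelian_group.a_group[OF ring_module_abelian_group[OF rm]]
    by (auto simp: ring_module_def group_hom_def group_hom_axioms_def hom_def)
  then show ?thesis using x by (simp add: group_hom.hom_inv a_inv_def)
qed

lemma module_ops_cases:
  assumes "(k, f) \<in> module_ops R M"
  obtains (add) "k = 2" "f = (\<lambda>xs. xs ! 0 \<oplus>\<^bsub>M\<^esub> xs ! 1)"
  | (neg) "k = 1" "f = (\<lambda>xs. \<ominus>\<^bsub>M\<^esub> (xs ! 0))"
  | (zero) "k = 0" "f = (\<lambda>xs. \<zero>\<^bsub>M\<^esub>)"
  | (smult) r where "r \<in> carrier R" "k = 1" "f = (\<lambda>xs. r \<odot>\<^bsub>M\<^esub> (xs ! 0))"
  using assms unfolding module_ops_def by auto

definition affine_op :: "('a, 'm) ring_scheme \<Rightarrow> nat \<Rightarrow> ('a list \<Rightarrow> 'a) \<Rightarrow> bool" where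
  "affine_op M m p \<longleftrightarrow> (\<forall>xs\<in>pow_carrier (carrier M) m. p xs \<in> carrier M) \<and>
     (\<forall>xs\<in>pow_carrier (carrier M) m. \<forall>ys\<in>pow_carrier (carrier M) m.
        p (map2 (add M) xs ys) = p xs \<oplus>\<^bsub>M\<^esub> p ys \<ominus>\<^bsub>M\<^esub> p (replicate m \<zero>\<^bsub>M\<^esub>))"

lemma Pol_module_affine_op:
  assumes rm: "ring_module R M" and p: "p \<in> Pol (carrier M) (module_ops R M) m"
  shows "affine_op M m p"
proof -
  interpret abelian_group M using rm by (rule ring_module_abelian_group)
  have a_inv_zero: "\<ominus>\<^bsub>M\<^esub> \<zero>\<^bsub>M\<^esub> = \<zero>\<^bsub>M\<^esub>" using add.inv_one by simp
  have zero_vec: "replicate m \<zero>\<^bsub>M\<^esub> \<in> pow_carrier (carrier M) m" by (auto simp: pow_carrier_def)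
  from p show ?thesis
  proof (induction rule: Pol.induct)
    case (proj i)
    then show ?case
      by (auto simp: affine_op_def a_minus_def pow_carrier_nth length_pow_carrier a_inv_zero)
  next
    case (const c)
    then show ?case by (simp add: affine_op_def a_minus_def a_assoc r_neg)
  next
    case (comp k f gs)
    have IH: "affine_op M m g" if "g \<in> set gs" for g using comp.IH that by blast
    from comp.hyps(1) show ?case
    proof (cases rule: module_ops_cases)
      case add
      then obtain g h where "gs = [g, h]" using comp.hyps(2) by (auto simp: numeral_2_eq_2 length_Suc_conv)
      with add IH[of g] IH[of h] zero_vec show ?thesis
        by (auto simp: affine_op_def a_minus_def minus_add a_ac)
    next
      case neg
      then obtain g where "gs = [g]" using comp.hyps(2) by (auto simp: length_Suc_conv)
      with neg IH[of g] zero_vec show ?thesis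
        by (auto simp: affine_op_def a_minus_def minus_add a_ac)
    next
      case zero
      then show ?thesis by (simp add: affine_op_def a_minus_def a_inv_zero)
    next
      case (smult r)
      then obtain g where "gs = [g]" using comp.hyps(2) by (auto simp: length_Suc_conv)
      moreover have "r \<odot>\<^bsub>M\<^esub> x \<in> carrier M" "r \<odot>\<^bsub>M\<^esub> (x \<oplus>\<^bsub>M\<^esub> y) = r \<odot>\<^bsub>M\<^esub> x \<oplus>\<^bsub>M\<^esub> r \<odot>\<^bsub>M\<^esub> y"
        if "x \<in> carrier M" "y \<in> carrier M" for x y
        using rm smult(1) that by (simp_all add: ring_module_def)
      ultimately show ?thesis using smult IH[of g] zero_vec
        by (auto simp: affine_op_def a_minus_def ring_module_smult_a_inv[OF rm])
    qed
  qed
qed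

definition unit_vec :: "('a, 'm) ring_scheme \<Rightarrow> nat \<Rightarrow> nat \<Rightarrow> 'a \<Rightarrow> 'a list" where
  "unit_vec M m i a = map (\<lambda>l. if l = i then a else \<zero>\<^bsub>M\<^esub>) [0..<m]"

lemma unit_vec_in_pow_carrier:
  assumes "abelian_group M" and "a \<in> carrier M"
  shows "unit_vec M m i a \<in> pow_carrier (carrier M) m"
proof -
  interpret abelian_group M by fact
  show ?thesis using assms(2) by (auto simp: unit_vec_def pow_carrier_def)
qed

lemma affine_op_eqI:
  assumes ag: "abelian_group M" and p: "affine_op M m p" and q: "affine_op M m q"
    and zero: "p (replicate m \<zero>\<^bsub>M\<^esub>) = q (replicate m \<zero>\<^bsub>M\<^esub>)"
    and unit: "\<And>i a. i < m \<Longrightarrow> a \<in> carrier M \<Longrightarrow> p (unit_vec M m i a) = q (unit_vec M m i a)"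
    and xs: "xs \<in> pow_carrier (carrier M) m"
  shows "p xs = q xs"
proof -
  interpret abelian_group M by (rule ag)
  define z where "z j = map (\<lambda>l. if l < j then xs ! l else \<zero>\<^bsub>M\<^esub>) [0..<m]" for j
  have z: "z j \<in> pow_carrier (carrier M) m" for j
    using pow_carrier_nth[OF xs] by (auto simp: z_def pow_carrier_def)
  have "p (z j) = q (z j)" if "j \<le> m" for j
    using that
  proof (induction j)
    case 0
    have "z 0 = replicate m \<zero>\<^bsub>M\<^esub>" unfolding z_def by (rule nth_equalityI) auto
    then show ?case using zero by simp
  next
    case (Suc j)
    let ?e = "unit_vec M m j (xs ! j)"
    have e: "?e \<in> pow_carrier (carrier M) m"
      using Suc.prems pow_carrier_nth[OF xs] by (intro unit_vec_in_pow_carrier[OF ag]) auto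
    have "z (Suc j) = map2 (add M) (z j) ?e"
      using pow_carrier_nth[OF xs] by (intro nth_equalityI) (auto simp: z_def unit_vec_def less_Suc_eq)
    then show ?case
      using p q z[of j] e Suc zero unit[of j "xs ! j"] pow_carrier_nth[OF xs] by (simp add: affine_op_def)
  qed
  moreover have "z m = xs" using xs unfolding z_def pow_carrier_def by (intro nth_equalityI) auto
  ultimately show ?thesis by auto
qed

lemma
  fixes m :: nat and M :: "('r, 'a, 'd) module_scheme"
  assumes rm: "ring_module R M" and fin: "finite (carrier M)"
  defines "Q \<equiv> (\<lambda>p. restrict p (pow_carrier (carrier M) m)) ` Pol (carrier M) (module_ops R M) m"
  shows finite_restrict_Pol_module: "finite Q"
    and card_restrict_Pol_module_le: "card Q \<le> card (carrier M) ^ (m * card (carrier M) + 1)"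
proof -
  have ag: "abelian_group M" using rm by (rule ring_module_abelian_group)
  let ?A = "carrier M"
  let ?T = "(({..<m} \<times> ?A) \<rightarrow>\<^sub>E ?A) \<times> ?A"
  define key where "key q = (restrict (\<lambda>(i, a). q (unit_vec M m i a)) ({..<m} \<times> ?A), q (replicate m \<zero>\<^bsub>M\<^esub>))"
    for q :: "'a list \<Rightarrow> 'a"
  have zero_vec: "replicate m \<zero>\<^bsub>M\<^esub> \<in> pow_carrier ?A m"
    using abelian_monoid.zero_closed[OF abelian_group.axioms(1)[OF ag]] by (auto simp: pow_carrier_def)
  have "key ` Q \<subseteq> ?T"
  proof
    fix k assume "k \<in> key ` Q"
    then obtain p where p: "p \<in> Pol ?A (module_ops R M) m" and k: "k = key (restrict p (pow_carrier ?A m))"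
      by (auto simp: Q_def)
    have "p xs \<in> ?A" if "xs \<in> pow_carrier ?A m" for xs
      using Pol_module_affine_op[OF rm p] that by (simp add: affine_op_def)
    then show "k \<in> ?T" using zero_vec unit_vec_in_pow_carrier[OF ag] by (auto simp: k key_def)
  qed
  moreover have "inj_on key Q"
  proof
    fix q1 q2 assume "q1 \<in> Q" "q2 \<in> Q" and key: "key q1 = key q2"
    then obtain p1 p2 where p1: "p1 \<in> Pol ?A (module_ops R M) m" "q1 = restrict p1 (pow_carrier ?A m)"
      and p2: "p2 \<in> Pol ?A (module_ops R M) m" "q2 = restrict p2 (pow_carrier ?A m)"
      by (auto simp: Q_def)
    have "p1 xs = p2 xs" if "xs \<in> pow_carrier ?A m" for xs
    proof (rule affine_op_eqI[OF ag Pol_module_affine_op[OF rm p1(1)] Pol_module_affine_op[OF rm p2(1)] _ _ that])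
      show "p1 (replicate m \<zero>\<^bsub>M\<^esub>) = p2 (replicate m \<zero>\<^bsub>M\<^esub>)"
        using key zero_vec p1(2) p2(2) by (simp add: key_def)
      fix i a assume "i < m" "a \<in> ?A"
      then show "p1 (unit_vec M m i a) = p2 (unit_vec M m i a)"
        using fun_cong[OF arg_cong[where f=fst, OF key], of "(i, a)"] p1(2) p2(2) unit_vec_in_pow_carrier[OF ag]
        by (simp add: key_def)
    qed
    then show "q1 = q2" by (auto simp: p1(2) p2(2))
  qed
  moreover have "finite ?T" using fin by (simp add: finite_PiE)
  ultimately show "finite Q" by (metis finite_imageD finite_subset)
  have "card Q \<le> card ?T" by (rule card_inj_on_le) fact+
  also have "card ?T = card ?A ^ (m * card ?A + 1)"
    using fin by (simp add: card_PiE card_cartesian_product)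
  finally show "card Q \<le> card ?A ^ (m * card ?A + 1)" .
qed


lemma Pol_module_add:
  assumes "g \<in> Pol A (module_ops R M) k" and "h \<in> Pol A (module_ops R M) k"
  shows "(\<lambda>xs. g xs \<oplus>\<^bsub>M\<^esub> h xs) \<in> Pol A (module_ops R M) k"
proof -
  have "(\<lambda>xs. (\<lambda>ys. ys ! 0 \<oplus>\<^bsub>M\<^esub> ys ! 1) (map (\<lambda>g. g xs) [g, h])) \<in> Pol A (module_ops R M) k"
    by (rule Pol.comp) (use assms in \<open>auto simp: module_ops_def\<close>)
  then show ?thesis by simp
qed

lemma Pol_module_a_inv:
  assumes "g \<in> Pol A (module_ops R M) k"
  shows "(\<lambda>xs. \<ominus>\<^bsub>M\<^esub> g xs) \<in> Pol A (module_ops R M) k"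
proof -
  have "(\<lambda>xs. (\<lambda>ys. \<ominus>\<^bsub>M\<^esub> ys ! 0) (map (\<lambda>g. g xs) [g])) \<in> Pol A (module_ops R M) k"
    by (rule Pol.comp) (use assms in \<open>auto simp: module_ops_def\<close>)
  then show ?thesis by simp
qed

lemma module_maltsev_polynomial:
  assumes "abelian_group M"
  shows "maltsev_polynomial (carrier M) (module_ops R M) (\<lambda>xs. xs ! 0 \<oplus>\<^bsub>M\<^esub> \<ominus>\<^bsub>M\<^esub> xs ! 1 \<oplus>\<^bsub>M\<^esub> xs ! 2)"
proof -
  interpret abelian_group M by fact
  have "(\<lambda>xs. xs ! i) \<in> Pol (carrier M) (module_ops R M) 3" if "i < 3" for i
    using that by (rule Pol.proj)
  then show ?thesis
    by (auto simp: maltsev_polynomial_def a_assoc l_neg r_neg intro!: Pol_module_add Pol_module_a_inv)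
qed

lemma maltsev_polynomial_transfer:
  assumes "poly_equivalent A F G" and "maltsev_polynomial A G q"
  obtains p where "maltsev_polynomial A F p"
proof -
  have "restrict q (pow_carrier A 3) \<in> (\<lambda>p. restrict p (pow_carrier A 3)) ` Pol A F 3"
    using assms unfolding poly_equivalent_def maltsev_polynomial_def by blast
  then obtain p where p: "p \<in> Pol A F 3" and pq: "restrict p (pow_carrier A 3) = restrict q (pow_carrier A 3)"
    by auto
  have "p xs = q xs" if "xs \<in> pow_carrier A 3" for xs using pq that by (metis restrict_apply')
  then have "maltsev_polynomial A F p"
    using p assms(2) by (simp add: maltsev_polynomial_def pow_carrier_def)
  then show ?thesis by (rule that)
qed

lemma poly_equiv_to_module_maltsev_polynomial:
  assumes "poly_equiv_to_module A F R M"
  obtains p where "maltsev_polynomial A F p"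
proof -
  from assms have rm: "ring_module R M" and A: "carrier M = A"
    and pe: "poly_equivalent A F (module_ops R M)"
    by (auto simp: poly_equiv_to_module_def)
  have "maltsev_polynomial A (module_ops R M) (\<lambda>xs. xs ! 0 \<oplus>\<^bsub>M\<^esub> \<ominus>\<^bsub>M\<^esub> xs ! 1 \<oplus>\<^bsub>M\<^esub> xs ! 2)"
    using module_maltsev_polynomial[OF ring_module_abelian_group[OF rm]] A by simp
  with maltsev_polynomial_transfer[OF pe] that show ?thesis by blast
qed

lemma generating_set_lower_bound:
  assumes affine: "poly_equiv_to_module A F R M" and fin: "finite A" and nontriv: "card A > 1"
    and X: "finite X" "generates (pow_carrier A n) (pow_ops F n) X"
  shows "n \<le> card A * card X + 1"
proof -
  from affine have rm: "ring_module R M" and A: "carrier M = A" and pe: "poly_equivalent A F (module_ops R M)"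
    unfolding poly_equiv_to_module_def by auto
  obtain xs where xs: "set xs = X" "distinct xs" using finite_distinct_list[OF X(1)] by blast
  let ?m = "length xs"
  have card_X: "card X = ?m" using xs distinct_card by metis
  have xs_pow: "\<forall>x\<in>set xs. x \<in> pow_carrier A n" using X(2) xs(1) by (auto simp: generates_def)
  let ?Q = "(\<lambda>p. restrict p (pow_carrier A ?m)) ` Pol A (module_ops R M) ?m"
  have Q: "finite ?Q" "card ?Q \<le> card A ^ (?m * card A + 1)"
    using finite_restrict_Pol_module[OF rm] card_restrict_Pol_module_le[OF rm] fin A by auto
  have "pow_carrier A n \<subseteq> (\<lambda>q. pol_apply n q xs) ` ?Q"
  proof
    fix s assume "s \<in> pow_carrier A n"
    then have "s \<in> Sg (pow_ops F n) (set xs)" using X(2) xs(1) by (simp add: generates_def)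
    moreover have "\<forall>x\<in>set xs. length x = n" using xs_pow length_pow_carrier by blast
    ultimately obtain p where p: "p \<in> Pol A F ?m" and s: "s = pol_apply n p xs"
      using Sg_pow_imp_pol_apply by blast
    have "map (\<lambda>v. v ! j) xs \<in> pow_carrier A ?m" if "j < n" for j
      using xs_pow that by (auto simp: pow_carrier_def intro: pow_carrier_nth)
    then have "s = pol_apply n (restrict p (pow_carrier A ?m)) xs"
      unfolding s by (intro nth_equalityI) auto
    moreover have "restrict p (pow_carrier A ?m) \<in> ?Q"
      using p pe unfolding poly_equivalent_def by blast
    ultimately show "s \<in> (\<lambda>q. pol_apply n q xs) ` ?Q" by blast
  qed
  then have "card (pow_carrier A n) \<le> card ((\<lambda>q. pol_apply n q xs) ` ?Q)"
    using Q(1) by (intro card_mono) auto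
  also have "\<dots> \<le> card ?Q" using Q(1) by (rule card_image_le)
  finally have "card A ^ n \<le> card A ^ (?m * card A + 1)"
    using Q(2) by (simp add: card_pow_carrier[OF fin])
  then have "n \<le> ?m * card A + 1" by (rule power_le_imp_le_exp[OF nontriv])
  then show ?thesis using card_X by (simp add: mult.commute)
qed

lemma real_of_nat_bigoI:
  fixes f g :: "nat \<Rightarrow> nat"
  assumes "\<And>n. n \<ge> n\<^sub>0 \<Longrightarrow> f n \<le> K * g n"
  shows "(\<lambda>n. real (f n)) \<in> O(\<lambda>n. real (g n))"
proof (rule bigoI[where c = "real K"])
  have "real (f n) \<le> real K * real (g n)" if "n \<ge> n\<^sub>0" for n
    using assms[OF that] by (metis of_nat_le_iff of_nat_mult)
  then show "\<forall>\<^sub>F n in at_top. norm (real (f n)) \<le> real K * norm (real (g n))"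
    by (intro eventually_at_top_linorderI[of n\<^sub>0]) simp
qed

lemma real_of_nat_bigomega_linear:
  fixes f :: "nat \<Rightarrow> nat"
  assumes "\<And>n. n \<le> K * f n + 1"
  shows "(\<lambda>n. real (f n)) \<in> \<Omega>(\<lambda>n. real n)"
proof -
  have "n \<le> (K + 1) * f n" if "n \<ge> 2" for n
    using assms[of n] that by (cases "f n") auto
  then have "(\<lambda>n. real n) \<in> O(\<lambda>n. real (f n))"
    by (rule real_of_nat_bigoI)
  then show ?thesis by (simp add: bigomega_iff_bigo)
qed

theorem theorem2p5:
  fixes A :: "'a set" and F :: "(nat \<times> ('a list \<Rightarrow> 'a)) set"
    and R :: "('r, 'c) ring_scheme" and M :: "('r, 'a, 'e) module_scheme"
  assumes alg: "is_algebra A F"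
    and affine: "poly_equiv_to_module A F R M"
    and fg2: "finitely_generated (pow_carrier A 2) (pow_ops F 2)"
  shows "(\<forall>n. finitely_generated (pow_carrier A n) (pow_ops F n))
         \<and> (\<lambda>n. real (d_gen A F n)) \<in> O(\<lambda>n. real n)
         \<and> (finite A \<and> card A > 1 \<longrightarrow> (\<lambda>n. real (d_gen A F n)) \<in> \<Theta>(\<lambda>n. real n))"
proof -
  from fg2 obtain G where G: "finite G" "generates (pow_carrier A 2) (pow_ops F 2) G"
    by (auto simp: finitely_generated_def)
  obtain p where p: "maltsev_polynomial A F p"
    using poly_equiv_to_module_maltsev_polynomial[OF affine] .
  let ?X = "\<lambda>n. \<Union>i<n. coord_embed i n ` G"
  have gen: "generates (pow_carrier A n) (pow_ops F n) (?X n)" and fin: "finite (?X n)" if "n \<ge> 1" for n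
    using generates_pow_by_coord_embeds[OF alg p G(2) that] G(1) by auto
  have fg: "finitely_generated (pow_carrier A n) (pow_ops F n)" for n
    using gen fin generates_pow_zero[OF alg] unfolding finitely_generated_def
    by (cases "n = 0") (auto intro: exI[of _ "?X n"])
  have "d_gen A F n \<le> card G * n" if "n \<ge> 1" for n
    using d_gen_le_card[OF fin gen] card_coord_embeds_le[OF G(1)] that by (meson order_trans)
  then have upper: "(\<lambda>n. real (d_gen A F n)) \<in> O(\<lambda>n. real n)"
    by (intro real_of_nat_bigoI[where g = "\<lambda>n. n"]) simp
  have "(\<lambda>n. real (d_gen A F n)) \<in> \<Omega>(\<lambda>n. real n)" if "finite A" "card A > 1"
  proof (rule real_of_nat_bigomega_linear)
    fix n
    obtain X where "finite X" "card X = d_gen A F n" "generates (pow_carrier A n) (pow_ops F n) X"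
      using d_gen_attained[OF fg] .
    then show "n \<le> card A * d_gen A F n + 1"
      using generating_set_lower_bound[OF affine that] by metis
  qed
  with fg upper show ?thesis by (auto intro: bigthetaI)
qed

end
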